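(* In the Heston model described in the context, for every $t>0$ the characteristic function $\psi_t(\xi):=\mathbb{E}_{\mathbb{Q}}\exp(i\xi\log S_t)=\exp\bigl(A(\xi,t)+B(\xi,t)v_0\bigr)$ of $\log S_t$ belongs to $L^p(\mathbb{R})$ for every $p\in[1,\infty]$.
   Context: Let $v_0,\kappa,\theta,\eta\in(0,\infty)$ with $2\kappa\theta>\eta^2$ (Feller condition) and $\rho\in(-1,1)$. Under a probability measure $\mathbb{Q}$, $W=(W^1,W^2)$ is a two-dimensional Wiener process with $\langle W^1,W^2\rangle_t=\rho t$, and $(S,v)$ is the unique solution of $S_t=1+\int_0^t\sqrt{v_s}S_s\,dW^1_s$, $v_t=v_0+\int_0^t\kappa(\theta-v_s)\,ds+\int_0^t\eta\sqrt{v_s}\,dW^2_s$ (so $S_0=1$, no dividends). The characteristic function of $\log S_t$ is $\exp(A(\xi,t)+B(\xi,t)v_0)$ where, with $\widehat\alpha(\xi):=-\frac12\xi(\xi+i)$, $\beta(\xi):=\kappa-i\eta\rho\xi$, $\gamma:=\eta^2/2$, $D:=(\beta^2-4\gamma\widehat\alpha)^{1/2}$, $G:=\frac{\beta-D}{\beta+D}$, \[ A(\xi,t)=\frac{\kappa\theta}{\eta^2}\Bigl((\beta+D)t-2\log\frac{e^{Dt}-G}{1-G}\Bigr),\qquad B(\xi,t)=\frac{\beta-D}{\eta^2}\,\frac{1-e^{-Dt}}{1-Ge^{-Dt}}, \] all functions of $\xi$ evaluated at $\xi$. For $z=|z|(\cos\vartheta+i\sin\vartheta)$, $\vartheta\in[-\pi,\pi)$: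 $z^{1/2}:=|z|^{1/2}(\cos(\vartheta/2)+i\sin(\vartheta/2))$, $\log z:=\log|z|+i\vartheta$. *)

theory Defs
  imports "HOL-Analysis.Analysis"
begin

text \<open>Argument of a complex number normalised to the range [-pi, pi), as in the paper.
  (The library's Arg has range (-pi, pi].)\<close>
definition parg :: "complex \<Rightarrow> real" where
  "parg z = (if Arg z = pi then - pi else Arg z)"

definition psqrt :: "complex \<Rightarrow> complex" where
  "psqrt z = complex_of_real (sqrt (cmod z)) * cis (parg z / 2)"

definition plog :: "complex \<Rightarrow> complex" where
  "plog z = complex_of_real (ln (cmod z)) + \<i> * complex_of_real (parg z)"

definition heston_alpha :: "real \<Rightarrow> complex" where
  "heston_alpha \<xi> = - (1/2) * complex_of_real \<xi> * (complex_of_real \<xi> + \<i>)"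

definition heston_beta :: "real \<Rightarrow> real \<Rightarrow> real \<Rightarrow> real \<Rightarrow> complex" where
  "heston_beta \<kappa> \<eta> \<rho> \<xi> = complex_of_real \<kappa> - \<i> * complex_of_real (\<eta> * \<rho> * \<xi>)"

definition heston_gamma :: "real \<Rightarrow> real" where
  "heston_gamma \<eta> = \<eta>\<^sup>2 / 2"

definition heston_D :: "real \<Rightarrow> real \<Rightarrow> real \<Rightarrow> real \<Rightarrow> complex" where
  "heston_D \<kappa> \<eta> \<rho> \<xi> =
     psqrt ((heston_beta \<kappa> \<eta> \<rho> \<xi>)\<^sup>2 - 4 * complex_of_real (heston_gamma \<eta>) * heston_alpha \<xi>)"

definition heston_G :: "real \<Rightarrow> real \<Rightarrow> real \<Rightarrow> real \<Rightarrow> complex" where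
  "heston_G \<kappa> \<eta> \<rho> \<xi> =
     (heston_beta \<kappa> \<eta> \<rho> \<xi> - heston_D \<kappa> \<eta> \<rho> \<xi>) / (heston_beta \<kappa> \<eta> \<rho> \<xi> + heston_D \<kappa> \<eta> \<rho> \<xi>)"

definition heston_A :: "real \<Rightarrow> real \<Rightarrow> real \<Rightarrow> real \<Rightarrow> real \<Rightarrow> real \<Rightarrow> complex" where
  "heston_A \<kappa> \<theta> \<eta> \<rho> \<xi> t =
     (let \<beta> = heston_beta \<kappa> \<eta> \<rho> \<xi>; D = heston_D \<kappa> \<eta> \<rho> \<xi>; G = heston_G \<kappa> \<eta> \<rho> \<xi> in
      complex_of_real (\<kappa> * \<theta> / \<eta>\<^sup>2) *
        ((\<beta> + D) * complex_of_real t - 2 * plog ((exp (D * complex_of_real t) - G) / (1 - G))))"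

definition heston_B :: "real \<Rightarrow> real \<Rightarrow> real \<Rightarrow> real \<Rightarrow> real \<Rightarrow> complex" where
  "heston_B \<kappa> \<eta> \<rho> \<xi> t =
     (let \<beta> = heston_beta \<kappa> \<eta> \<rho> \<xi>; D = heston_D \<kappa> \<eta> \<rho> \<xi>; G = heston_G \<kappa> \<eta> \<rho> \<xi> in
      (\<beta> - D) / complex_of_real (\<eta>\<^sup>2) *
        ((1 - exp (- D * complex_of_real t)) / (1 - G * exp (- D * complex_of_real t))))"

definition heston_cf :: "real \<Rightarrow> real \<Rightarrow> real \<Rightarrow> real \<Rightarrow> real \<Rightarrow> real \<Rightarrow> real \<Rightarrow> complex" where
  "heston_cf v0 \<kappa> \<theta> \<eta> \<rho> t \<xi> =
     exp (heston_A \<kappa> \<theta> \<eta> \<rho> \<xi> t + heston_B \<kappa> \<eta> \<rho> \<xi> t * complex_of_real v0)"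

definition memLp :: "ennreal \<Rightarrow> (real \<Rightarrow> complex) \<Rightarrow> bool" where
  "memLp p f \<longleftrightarrow> f \<in> borel_measurable lborel \<and>
     (if p = \<infinity> then (\<exists>C. AE x in lborel. cmod (f x) \<le> C)
      else integrable lborel (\<lambda>x. cmod (f x) powr (enn2real p)))"

end

theory Submission
  imports Defs "HOL-Complex_Analysis.Cauchy_Integral_Theorem" "HOL-Probability.Sinc_Integral"
begin

text \<open>
  The exponent B solves a Riccati equation, so B = P/R where (R, P) solves the linear system
  obtained by the usual substitution; in the same way exp(A) is a power of R. Hence
  Re B = - Re (P conj R) / |R|^2 and Re A = \<kappa>\<theta>/\<eta>^2 (\<kappa> t - ln |R(t)|^2).
  Differentiating y = |R|^2 and q = - Re (P conj R) gives y' = \<kappa> y + \<eta>^2 q and,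
  since |\<rho>| < 1, q' \<ge> (1 - |\<rho>|) \<xi>^2 y / 2. Bootstrapping these two differential
  inequalities from y(0) = 1, q(0) = 0 gives q \<ge> 0 and y(t) \<ge> 1 + c \<xi>^4 t^4, hence
  |\<psi>_t(\<xi>)| \<le> C (1 + c \<xi>^4 t^4)^(-\<kappa>\<theta>/\<eta>^2). The Feller condition makes the
  exponent exceed 1/2, so every power |\<psi>_t|^p with p \<ge> 1 is dominated by a multiple of
  1/(1 + \<xi>^2).
\<close>

lemma le_of_deriv_le:
  fixes f g f' g' :: "real \<Rightarrow> real"
  assumes "a \<le> b"
    and "\<And>s. a \<le> s \<Longrightarrow> s \<le> b \<Longrightarrow> (f has_real_derivative f' s) (at s)"
    and "\<And>s. a \<le> s \<Longrightarrow> s \<le> b \<Longrightarrow> (g has_real_derivative g' s) (at s)"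
    and "\<And>s. a \<le> s \<Longrightarrow> s \<le> b \<Longrightarrow> g' s \<le> f' s"
    and "g a \<le> f a"
  shows "g b \<le> f b"
proof -
  have "(\<lambda>x. g x - f x) b \<le> (\<lambda>x. g x - f x) a"
    by (rule deriv_nonpos_imp_antimono[where g'="\<lambda>s. g' s - f' s"])
       (use assms in \<open>auto intro!: derivative_intros\<close>)
  then show ?thesis using assms(5) by simp
qed

lemma quartic_growth_of_differential_inequalities:
  fixes y q q' :: "real \<Rightarrow> real" and a b k s :: real
  assumes "0 \<le> a" "0 \<le> b" "0 \<le> k"
    and y0: "y 0 = 1" and q0: "q 0 = 0"
    and y_nonneg: "\<And>s. 0 \<le> y s"
    and y_deriv: "\<And>s. (y has_real_derivative a * y s + b * q s) (at s)"
    and q_deriv: "\<And>s. (q has_real_derivative q' s) (at s)"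
    and q'_ge: "\<And>s. k * y s \<le> q' s"
    and "0 \<le> s"
  shows "1 + b * k * s^2 / 2 + b^2 * k^2 * s^4 / 24 \<le> y s"
proof -
  have y_ge: "h s \<le> y s"
    if "0 \<le> s" "h 0 \<le> 1" "\<And>u. (h has_real_derivative h' u) (at u)"
      "\<And>u. 0 \<le> u \<Longrightarrow> h' u \<le> b * q u" for h h' s
  proof (rule le_of_deriv_le[OF \<open>0 \<le> s\<close> y_deriv that(3)])
    fix u :: real assume "0 \<le> u"
    then show "h' u \<le> a * y u + b * q u"
      using that(4)[of u] mult_nonneg_nonneg[OF \<open>0 \<le> a\<close> y_nonneg[of u]] by linarith
  qed (use that y0 in auto)
  have q_ge: "g s \<le> q s"
    if "0 \<le> s" "g 0 \<le> 0" "\<And>u. (g has_real_derivative g' u) (at u)"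
      "\<And>u. 0 \<le> u \<Longrightarrow> g' u \<le> k * y u" for g g' s
    by (rule le_of_deriv_le[OF \<open>0 \<le> s\<close> q_deriv that(3)])
       (use that q0 q'_ge in \<open>auto intro: order_trans\<close>)
  have q1: "0 \<le> q u" if "0 \<le> u" for u
    by (rule q_ge[where g' = "\<lambda>_. 0"])
       (use that \<open>0 \<le> k\<close> y_nonneg in \<open>auto intro!: derivative_eq_intros\<close>)
  have y1: "1 \<le> y u" if "0 \<le> u" for u
    by (rule y_ge[where h' = "\<lambda>_. 0"])
       (use that q1 \<open>0 \<le> b\<close> in \<open>auto intro!: derivative_eq_intros\<close>)
  have q2: "k * u \<le> q u" if "0 \<le> u" for u
    by (rule q_ge[where g' = "\<lambda>_. k"])
       (use that y1 \<open>0 \<le> k\<close> in \<open>auto intro!: derivative_eq_intros simp: mult_le_cancel_left1\<close>)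
  have y2: "1 + b * k * u^2 / 2 \<le> y u" if "0 \<le> u" for u
  proof (rule y_ge[where h' = "\<lambda>u. b * (k * u)"])
    show "((\<lambda>u. 1 + b * k * u^2 / 2) has_real_derivative b * (k * v)) (at v)" for v
      by (auto intro!: derivative_eq_intros)
  qed (use that q2 \<open>0 \<le> b\<close> in \<open>auto intro: mult_left_mono\<close>)
  have q3: "k * u + b * k^2 * u^3 / 6 \<le> q u" if "0 \<le> u" for u
  proof (rule q_ge[where g' = "\<lambda>u. k * (1 + b * k * u^2 / 2)"])
    show "((\<lambda>u. k * u + b * k^2 * u^3 / 6) has_real_derivative k * (1 + b * k * v^2 / 2)) (at v)"
      for v by (auto intro!: derivative_eq_intros simp: field_simps power2_eq_square)
  qed (use that y2 \<open>0 \<le> k\<close> in \<open>auto intro: mult_left_mono\<close>)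
  show ?thesis
  proof (rule y_ge[where h' = "\<lambda>u. b * (k * u + b * k^2 * u^3 / 6)"])
    show "((\<lambda>u. 1 + b * k * u^2 / 2 + b^2 * k^2 * u^4 / 24) has_real_derivative
        b * (k * v + b * k^2 * v^3 / 6)) (at v)" for v
      by (auto intro!: derivative_eq_intros simp: field_simps eval_nat_numeral)
  qed (use \<open>0 \<le> s\<close> q3 \<open>0 \<le> b\<close> in \<open>auto intro: mult_left_mono\<close>)
qed

lemma two_abs_cross_le_sum_squares:
  fixes a b c d :: real
  shows "2 * \<bar>a * d - b * c\<bar> \<le> a^2 + b^2 + c^2 + d^2"
proof -
  have "a^2 + b^2 + c^2 + d^2 - 2 * (a * d - b * c) = (a - d)^2 + (b + c)^2"
    and "a^2 + b^2 + c^2 + d^2 + 2 * (a * d - b * c) = (a + d)^2 + (b - c)^2"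
    by (simp_all add: power2_eq_square algebra_simps)
  then have "0 \<le> a^2 + b^2 + c^2 + d^2 - 2 * (a * d - b * c)"
    and "0 \<le> a^2 + b^2 + c^2 + d^2 + 2 * (a * d - b * c)"
    by simp_all
  then show ?thesis by linarith
qed

lemma powr_quartic_le_inverse_square:
  fixes L c \<xi> :: real
  assumes "0 < L" "1/2 \<le> c"
  shows "(1 + L * \<xi>^4) powr (- c) \<le> sqrt (2 * (1 + 1/L)) / (1 + \<xi>^2)"
proof -
  define Y where "Y = 1 + L * \<xi>^4"
  have "1 \<le> Y" unfolding Y_def using assms by simp
  have "(1 + \<xi>^2)^2 \<le> 2 * (1 + \<xi>^4)"
    using zero_le_power2[of "1 - \<xi>^2"] by (simp add: power2_eq_square algebra_simps eval_nat_numeral)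
  also have "1 + \<xi>^4 \<le> (1 + 1/L) * Y"
    unfolding Y_def using assms by (simp add: field_simps)
  finally have "1 + \<xi>^2 \<le> sqrt (2 * (1 + 1/L) * Y)"
    by (intro real_le_rsqrt) (simp only: mult.assoc)
  then have "1 + \<xi>^2 \<le> sqrt (2 * (1 + 1/L)) * sqrt Y" by (simp add: real_sqrt_mult)
  have "Y powr (- c) \<le> Y powr (- (1/2))"
    using \<open>1 \<le> Y\<close> assms by (intro powr_mono) auto
  also have "\<dots> = inverse (sqrt Y)"
    using \<open>1 \<le> Y\<close> by (simp add: powr_minus powr_half_sqrt)
  also have "\<dots> \<le> sqrt (2 * (1 + 1/L)) / (1 + \<xi>^2)"
    using \<open>1 + \<xi>^2 \<le> sqrt (2 * (1 + 1/L)) * sqrt Y\<close> \<open>1 \<le> Y\<close>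
    by (simp add: field_simps add_pos_nonneg)
  finally show ?thesis by (simp add: Y_def)
qed

lemma integrable_inverse_1_plus_square_lborel:
  "integrable lborel (\<lambda>x::real. inverse (1 + x^2))"
proof -
  have "einterval (-\<infinity>) \<infinity> = (UNIV :: real set)" by (auto simp: einterval_def)
  then show ?thesis
    using integrable_inverse_1_plus_square by (simp add: set_integrable_def)
qed

lemma memLp_of_norm_le_powr_quartic:
  fixes f :: "real \<Rightarrow> complex" and p :: ennreal
  assumes f: "f \<in> borel_measurable lborel" and "0 < L" "1/2 \<le> c" "1 \<le> p"
    and bound: "\<And>\<xi>. cmod (f \<xi>) \<le> K * (1 + L * \<xi>^4) powr (- c)"
  shows "memLp p f"
proof -
  have "0 \<le> K" using order_trans[OF norm_ge_zero bound[of 0]] by simp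
  show ?thesis
  proof (cases p)
    case top
    have "cmod (f \<xi>) \<le> K" for \<xi>
    proof -
      have "1 \<le> 1 + L * \<xi>^4" using \<open>0 < L\<close> by simp
      then have "(1 + L * \<xi>^4) powr (- c) \<le> 1"
        using powr_mono[of "- c" 0 "1 + L * \<xi>^4"] \<open>1/2 \<le> c\<close> by simp
      then have "K * (1 + L * \<xi>^4) powr (- c) \<le> K"
        using \<open>0 \<le> K\<close> by (simp add: mult_left_le)
      then show ?thesis using bound[of \<xi>] by linarith
    qed
    then show ?thesis using top f by (auto simp: memLp_def)
  next
    case (real r)
    have "1 \<le> r" using \<open>1 \<le> p\<close> real by simp
    have "c * 1 \<le> c * r" using \<open>1 \<le> r\<close> \<open>1/2 \<le> c\<close> by (intro mult_left_mono) auto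
    then have "1/2 \<le> c * r" using \<open>1/2 \<le> c\<close> by linarith
    define M where "M = K powr r * sqrt (2 * (1 + 1/L))"
    have "cmod (f \<xi>) powr r \<le> M * inverse (1 + \<xi>^2)" for \<xi>
    proof -
      have "cmod (f \<xi>) powr r \<le> (K * (1 + L * \<xi>^4) powr (- c)) powr r"
        using bound[of \<xi>] \<open>1 \<le> r\<close> by (intro powr_mono2) auto
      also have "\<dots> = K powr r * (1 + L * \<xi>^4) powr (- (c * r))"
        using \<open>0 \<le> K\<close> \<open>0 < L\<close> by (simp add: powr_mult powr_powr add_pos_nonneg)
      also have "\<dots> \<le> K powr r * (sqrt (2 * (1 + 1/L)) / (1 + \<xi>^2))"
        using \<open>1/2 \<le> c * r\<close> \<open>0 < L\<close>
        by (intro mult_left_mono powr_quartic_le_inverse_square) auto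
      finally show ?thesis by (simp add: M_def divide_inverse mult.assoc)
    qed
    then have "integrable lborel (\<lambda>x. cmod (f x) powr r)"
      using f by (intro Bochner_Integration.integrable_bound[OF
          integrable_mult_right[OF integrable_inverse_1_plus_square_lborel, of M]])
        (auto intro: order_trans[OF _ abs_ge_self])
    then show ?thesis using real f by (simp add: memLp_def)
  qed
qed

lemma psqrt_squared: "(psqrt z)^2 = z"
proof -
  have "(cis (parg z / 2))^2 = cis (Arg z)"
    unfolding parg_def by (auto simp: power2_eq_square cis_mult complex_eq_iff)
  then have "(psqrt z)^2 = of_real (cmod z) * cis (Arg z)"
    unfolding psqrt_def by (simp add: power_mult_distrib flip: of_real_power)
  also have "\<dots> = z" using rcis_cmod_Arg[of z] by (simp add: rcis_def)
  finally show ?thesis .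
qed

lemma Re_psqrt_nonneg: "0 \<le> Re (psqrt z)"
proof -
  have "-pi \<le> parg z" "parg z \<le> pi" unfolding parg_def using Arg_bounded[of z] by auto
  then have "0 \<le> cos (parg z / 2)" by (intro cos_ge_zero) auto
  then show ?thesis unfolding psqrt_def by simp
qed

lemma measurable_parg [measurable]: "parg \<in> borel_measurable borel"
  unfolding parg_def[abs_def] Arg_def[abs_def] by measurable

lemma measurable_cis [measurable]: "cis \<in> borel_measurable borel"
  by (intro borel_measurable_continuous_onI continuous_intros)

lemma measurable_psqrt [measurable]: "psqrt \<in> borel_measurable borel"
  unfolding psqrt_def[abs_def] by measurable

lemma measurable_plog [measurable]: "plog \<in> borel_measurable borel"
  unfolding plog_def[abs_def] by measurable

lemma measurable_heston_cf:
  "heston_cf v0 \<kappa> \<theta> \<eta> \<rho> t \<in> borel_measurable lborel"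
  unfolding heston_cf_def[abs_def] heston_A_def heston_B_def heston_G_def heston_D_def
    heston_beta_def heston_alpha_def Let_def
  by measurable

locale heston_frequency =
  fixes \<kappa> \<eta> \<rho> \<xi> :: real
  assumes kappa_pos: "\<kappa> > 0" and eta_pos: "\<eta> > 0" and abs_rho_less_1: "\<bar>\<rho>\<bar> < 1"
begin

abbreviation "\<beta> \<equiv> heston_beta \<kappa> \<eta> \<rho> \<xi>"
abbreviation "D \<equiv> heston_D \<kappa> \<eta> \<rho> \<xi>"
abbreviation "G \<equiv> heston_G \<kappa> \<eta> \<rho> \<xi>"

definition w :: complex where "w = Complex (\<xi>^2) \<xi>"

lemma Re_beta: "Re \<beta> = \<kappa>" and Im_beta: "Im \<beta> = -(\<eta> * \<rho> * \<xi>)"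
  and Re_w: "Re w = \<xi>^2" and Im_w: "Im w = \<xi>"
  by (simp_all add: heston_beta_def w_def)

lemma D_squared: "D^2 = \<beta>^2 + of_real (\<eta>^2) * w"
proof -
  have "\<beta>^2 - 4 * of_real (heston_gamma \<eta>) * heston_alpha \<xi> = \<beta>^2 + of_real (\<eta>^2) * w"
    unfolding heston_gamma_def heston_alpha_def w_def
    by (simp add: complex_eq_iff power2_eq_square algebra_simps)
  then show ?thesis unfolding heston_D_def psqrt_squared .
qed

lemma w_eq: "w = (D^2 - \<beta>^2) / of_real (\<eta>^2)"
  using D_squared eta_pos by (simp add: field_simps)

lemma D_nonzero: "D \<noteq> 0"
proof
  have "\<rho>^2 < 1" using abs_rho_less_1 by (simp add: abs_square_less_1)
  then have "0 \<le> \<eta>^2 * \<xi>^2 * (1 - \<rho>^2)" by simp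
  moreover have "Re (\<beta>^2 + of_real (\<eta>^2) * w) = \<kappa>^2 + \<eta>^2 * \<xi>^2 * (1 - \<rho>^2)"
    by (simp add: power2_eq_square Re_beta Im_beta Re_w Im_w algebra_simps)
  ultimately have "Re (D^2) > 0"
    using kappa_pos add_pos_nonneg[of "\<kappa>^2"] unfolding D_squared by simp
  moreover assume "D = 0"
  ultimately show False by simp
qed

lemma beta_plus_D_nonzero: "\<beta> + D \<noteq> 0"
proof -
  have "0 < Re (\<beta> + D)"
    using kappa_pos Re_psqrt_nonneg by (simp add: Re_beta heston_D_def add_pos_nonneg)
  then have "Re (\<beta> + D) \<noteq> Re 0" by simp
  then show ?thesis by metis
qed

text \<open>B = P/R for the solution (R, P) of the linearised Riccati system
  R' = \<beta>/2 R - \<eta>^2/2 P, P' = - w/2 R - \<beta>/2 P, R(0) = 1, P(0) = 0.\<close>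
definition Rf :: "complex \<Rightarrow> complex" where
  "Rf u = ((\<beta> + D) * exp (D*u/2) - (\<beta> - D) * exp (-(D*u/2))) / (2*D)"
definition Pf :: "complex \<Rightarrow> complex" where
  "Pf u = - w * (exp (D*u/2) - exp (-(D*u/2))) / (2*D)"

lemma Rf_deriv: "(Rf has_field_derivative \<beta>/2 * Rf u - of_real (\<eta>^2/2) * Pf u) (at u)"
proof -
  have "(Rf has_field_derivative ((\<beta> + D) * exp (D*u/2) + (\<beta> - D) * exp (-(D*u/2))) / 4) (at u)"
    unfolding Rf_def[abs_def] using D_nonzero
    by (auto intro!: derivative_eq_intros simp: field_simps)
  then show ?thesis
    by (rule DERIV_cong)
       (use D_nonzero eta_pos in \<open>simp add: Rf_def Pf_def w_eq field_simps power2_eq_square\<close>)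
qed

lemma Pf_deriv: "(Pf has_field_derivative - w/2 * Rf u - \<beta>/2 * Pf u) (at u)"
proof -
  have "(Pf has_field_derivative - w * (exp (D*u/2) + exp (-(D*u/2))) / 4) (at u)"
    unfolding Pf_def[abs_def] using D_nonzero
    by (auto intro!: derivative_eq_intros simp: field_simps)
  then show ?thesis
    by (rule DERIV_cong) (use D_nonzero in \<open>simp add: Rf_def Pf_def field_simps\<close>)
qed

lemma G_eq: "G = (\<beta> - D) / (\<beta> + D)"
  by (simp add: heston_G_def)

lemma exp_half_forms:
  "exp (D*u) = exp (D*u/2) * exp (D*u/2)"
  "exp (- D*u) = inverse (exp (D*u/2) * exp (D*u/2))"
  "Rf u = ((\<beta> + D) * exp (D*u/2) - (\<beta> - D) * inverse (exp (D*u/2))) / (2*D)"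
  "Pf u = - w * (exp (D*u/2) - inverse (exp (D*u/2))) / (2*D)"
proof -
  have "D*u/2 + D*u/2 = D*u" by simp
  then show "exp (D*u) = exp (D*u/2) * exp (D*u/2)" by (metis mult_exp_exp)
  then show "exp (- D*u) = inverse (exp (D*u/2) * exp (D*u/2))" by (simp add: exp_minus)
qed (simp_all add: Rf_def Pf_def exp_minus)

lemma one_minus_G: "1 - G = 2 * D / (\<beta> + D)"
  using beta_plus_D_nonzero by (simp add: G_eq field_simps)

lemma G_mult_beta_plus_D: "G * (\<beta> + D) = \<beta> - D"
  using beta_plus_D_nonzero by (simp add: G_eq)

lemma Rf_closed_form: "(exp (D*u) - G) / (1 - G) = exp (D*u/2) * Rf u"
proof -
  define e where "e = exp (D*u/2)"
  note forms = exp_half_forms[of u, folded e_def]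
  have "e \<noteq> 0" by (simp add: e_def)
  have "(exp (D*u) - G) / (1 - G) = ((\<beta> + D) * (e * e) - G * (\<beta> + D)) / (2 * D)"
    unfolding forms(1) one_minus_G using beta_plus_D_nonzero by (simp add: field_simps)
  also have "\<dots> = e * Rf u"
    unfolding G_mult_beta_plus_D forms(3) using \<open>e \<noteq> 0\<close> D_nonzero by (simp add: field_simps)
  finally show ?thesis by (simp add: e_def)
qed

lemma Pf_over_Rf:
  assumes "Rf u \<noteq> 0"
  shows "(\<beta> - D) / of_real (\<eta>^2) * ((1 - exp (- D*u)) / (1 - G * exp (- D*u))) = Pf u / Rf u"
proof -
  define e where "e = exp (D*u/2)"
  note forms = exp_half_forms[of u, folded e_def]
  define N where "N = (\<beta> + D) * (e * e) - (\<beta> - D)"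
  have "e \<noteq> 0" by (simp add: e_def)
  have Rf: "Rf u = N / (2 * D * e)" and Pf: "Pf u = - w * (e * e - 1) / (2 * D * e)"
    unfolding forms N_def using \<open>e \<noteq> 0\<close> D_nonzero by (simp_all add: field_simps)
  have "N \<noteq> 0" using assms Rf by auto
  have eeG: "e * e - G = N / (\<beta> + D)"
    unfolding N_def G_eq using beta_plus_D_nonzero by (simp add: field_simps)
  have "(1 - exp (- D*u)) / (1 - G * exp (- D*u)) = (e * e - 1) / (e * e - G)"
  proof -
    have "e * e - G \<noteq> 0" using eeG \<open>N \<noteq> 0\<close> beta_plus_D_nonzero by simp
    then show ?thesis unfolding forms(2) using \<open>e \<noteq> 0\<close> by (simp add: field_simps)
  qed
  also have "\<dots> = (\<beta> + D) * (e * e - 1) / N"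
    unfolding eeG using beta_plus_D_nonzero by simp
  finally have ratio: "(1 - exp (- D*u)) / (1 - G * exp (- D*u)) = (\<beta> + D) * (e * e - 1) / N" .
  have "- w = (\<beta> - D) * (\<beta> + D) / of_real (\<eta>^2)"
    unfolding w_eq using eta_pos by (simp add: field_simps power2_eq_square)
  moreover have "Pf u / Rf u = - w * (e * e - 1) / N"
    unfolding Rf Pf using \<open>e \<noteq> 0\<close> D_nonzero \<open>N \<noteq> 0\<close> by (simp add: field_simps)
  ultimately show ?thesis
    unfolding ratio by simp
qed

definition R :: "real \<Rightarrow> complex" where "R s = Rf (of_real s)"
definition P :: "real \<Rightarrow> complex" where "P s = Pf (of_real s)"
definition y :: "real \<Rightarrow> real" where "y s = (cmod (R s))^2"
definition q :: "real \<Rightarrow> real" where "q s = - Re (P s * cnj (R s))"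
definition dq :: "real \<Rightarrow> real" where
  "dq s = \<eta> * \<rho> * \<xi> * (Im (P s) * Re (R s) - Re (P s) * Im (R s)) + \<xi>^2 * y s / 2
     + \<eta>^2 * (cmod (P s))^2 / 2"

lemma R_0: "R 0 = 1" and P_0: "P 0 = 0"
  using D_nonzero by (simp_all add: R_def Rf_def P_def Pf_def field_simps)

lemma y_0: "y 0 = 1" and q_0: "q 0 = 0"
  by (simp_all add: y_def q_def R_0 P_0)

lemma y_components: "y s = (Re (R s))^2 + (Im (R s))^2"
  by (simp add: y_def cmod_power2)

lemma q_components: "q s = - (Re (P s) * Re (R s) + Im (P s) * Im (R s))"
  by (simp add: q_def)

lemma R_vector_derivative:
  "(R has_vector_derivative \<beta>/2 * R s - of_real (\<eta>^2/2) * P s) (at s)"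
  using has_vector_derivative_real_field[OF Rf_deriv] unfolding R_def[abs_def] P_def by simp

lemma P_vector_derivative:
  "(P has_vector_derivative - w/2 * R s - \<beta>/2 * P s) (at s)"
  using has_vector_derivative_real_field[OF Pf_deriv] unfolding R_def P_def[abs_def] by simp

lemma y_deriv: "(y has_real_derivative \<kappa> * y s + \<eta>^2 * q s) (at s)"
proof -
  have "((\<lambda>s. (Re (R s))^2 + (Im (R s))^2) has_real_derivative
      2 * Re (R s) * Re (\<beta>/2 * R s - of_real (\<eta>^2/2) * P s)
      + 2 * Im (R s) * Im (\<beta>/2 * R s - of_real (\<eta>^2/2) * P s)) (at s)"
    by (auto intro!: derivative_eq_intros R_vector_derivative)
  then show ?thesis
    unfolding y_components[abs_def]
    by (rule DERIV_cong) (simp add: q_components Re_beta Im_beta field_simps power2_eq_square)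
qed

lemma q_deriv: "(q has_real_derivative dq s) (at s)"
proof -
  have "((\<lambda>s. - (Re (P s) * Re (R s) + Im (P s) * Im (R s))) has_real_derivative
      - (Re (- w/2 * R s - \<beta>/2 * P s) * Re (R s) + Re (P s) * Re (\<beta>/2 * R s - of_real (\<eta>^2/2) * P s)
       + Im (- w/2 * R s - \<beta>/2 * P s) * Im (R s) + Im (P s) * Im (\<beta>/2 * R s - of_real (\<eta>^2/2) * P s)))
      (at s)"
    by (auto intro!: derivative_eq_intros R_vector_derivative P_vector_derivative)
  then show ?thesis
    unfolding q_components[abs_def]
    by (rule DERIV_cong) (unfold dq_def y_components cmod_power2,
       simp add: Re_beta Im_beta Re_w Im_w field_simps power2_eq_square)
qed

lemma dq_ge: "(1 - \<bar>\<rho>\<bar>) / 2 * \<xi>^2 * y s \<le> dq s"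
proof -
  define X where "X = (\<xi> * Re (R s)) * (\<eta> * Im (P s)) - (\<xi> * Im (R s)) * (\<eta> * Re (P s))"
  define Q where "Q = \<xi>^2 * y s + \<eta>^2 * (cmod (P s))^2"
  have "2 * \<bar>X\<bar> \<le> Q"
    using two_abs_cross_le_sum_squares[where a = "\<xi> * Re (R s)" and b = "\<xi> * Im (R s)"
        and c = "\<eta> * Re (P s)" and d = "\<eta> * Im (P s)"]
    by (simp add: X_def Q_def y_components cmod_power2 power_mult_distrib algebra_simps)
  then have "\<bar>\<rho> * X\<bar> \<le> \<bar>\<rho>\<bar> * Q / 2"
    unfolding abs_mult using mult_left_mono[of "2 * \<bar>X\<bar>" Q "\<bar>\<rho>\<bar>"] by simp
  then have "- \<bar>\<rho>\<bar> * Q / 2 \<le> \<rho> * X"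
    by linarith
  moreover have "dq s - (1 - \<bar>\<rho>\<bar>) / 2 * \<xi>^2 * y s
      = (\<rho> * X + \<bar>\<rho>\<bar> * Q / 2) + (1 - \<bar>\<rho>\<bar>) / 2 * (\<eta>^2 * (cmod (P s))^2)"
    by (simp add: dq_def X_def Q_def field_simps)
  moreover have "0 \<le> (1 - \<bar>\<rho>\<bar>) / 2 * (\<eta>^2 * (cmod (P s))^2)"
    using abs_rho_less_1 by simp
  ultimately show ?thesis by linarith
qed

lemma q_nonneg:
  assumes "0 \<le> s"
  shows "0 \<le> q s"
proof (rule le_of_deriv_le[OF assms q_deriv DERIV_const])
  fix u
  have "0 \<le> (1 - \<bar>\<rho>\<bar>) / 2 * \<xi>^2 * y u"
    using abs_rho_less_1 by (simp add: y_def)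
  then show "0 \<le> dq u" using dq_ge[of u] by linarith
qed (simp add: q_0)

lemma y_growth:
  assumes "0 \<le> s"
  shows "1 + \<eta>^4 * (1 - \<bar>\<rho>\<bar>)^2 * s^4 / 96 * \<xi>^4 \<le> y s"
proof -
  have "1 + \<eta>^2 * ((1 - \<bar>\<rho>\<bar>) / 2 * \<xi>^2) * s^2 / 2
      + (\<eta>^2)^2 * ((1 - \<bar>\<rho>\<bar>) / 2 * \<xi>^2)^2 * s^4 / 24 \<le> y s"
    by (rule quartic_growth_of_differential_inequalities[OF _ _ _ y_0 q_0 _ y_deriv q_deriv dq_ge assms])
       (use kappa_pos abs_rho_less_1 in \<open>auto simp: y_def\<close>)
  moreover have "0 \<le> \<eta>^2 * ((1 - \<bar>\<rho>\<bar>) / 2 * \<xi>^2) * s^2 / 2"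
    using abs_rho_less_1 by simp
  moreover have "(\<eta>^2)^2 * ((1 - \<bar>\<rho>\<bar>) / 2 * \<xi>^2)^2 * s^4 / 24
      = \<eta>^4 * (1 - \<bar>\<rho>\<bar>)^2 * s^4 / 96 * \<xi>^4"
    by (simp add: eval_nat_numeral field_simps)
  ultimately show ?thesis by linarith
qed

lemma Re_heston_A:
  assumes "0 < y t"
  shows "Re (heston_A \<kappa> \<theta> \<eta> \<rho> \<xi> t) = \<kappa> * \<theta> / \<eta>^2 * (\<kappa> * t - ln (y t))"
proof -
  define X where "X = exp (D * of_real t / 2) * R t"
  have "heston_A \<kappa> \<theta> \<eta> \<rho> \<xi> t
      = of_real (\<kappa> * \<theta> / \<eta>^2) * ((\<beta> + D) * of_real t - 2 * plog X)"
    by (simp add: heston_A_def Let_def Rf_closed_form R_def X_def)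
  then have "Re (heston_A \<kappa> \<theta> \<eta> \<rho> \<xi> t) = \<kappa> * \<theta> / \<eta>^2 * ((\<kappa> + Re D) * t - 2 * ln (cmod X))"
    by (simp add: plog_def Re_beta)
  also have "2 * ln (cmod X) = Re D * t + ln (y t)"
    using assms by (simp add: X_def norm_mult y_def ln_mult ln_realpow)
  finally show ?thesis by (simp add: algebra_simps)
qed

lemma Re_heston_B:
  assumes "0 < y t"
  shows "Re (heston_B \<kappa> \<eta> \<rho> \<xi> t) = - q t / y t"
proof -
  have "heston_B \<kappa> \<eta> \<rho> \<xi> t = P t / R t"
  proof -
    have "R t \<noteq> 0" using assms by (auto simp: y_def)
    then show ?thesis using Pf_over_Rf by (simp add: heston_B_def Let_def R_def P_def)
  qed
  then show ?thesis by (simp add: Re_divide q_components y_components algebra_simps)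
qed

end

lemma norm_heston_cf_le:
  fixes v0 \<kappa> \<theta> \<eta> \<rho> t \<xi> :: real
  assumes "0 \<le> v0" "0 < \<kappa>" "0 \<le> \<theta>" "0 < \<eta>" "\<bar>\<rho>\<bar> < 1" "0 \<le> t"
  shows "cmod (heston_cf v0 \<kappa> \<theta> \<eta> \<rho> t \<xi>)
    \<le> exp (\<kappa> * \<theta> / \<eta>^2 * \<kappa> * t) * (1 + \<eta>^4 * (1 - \<bar>\<rho>\<bar>)^2 * t^4 / 96 * \<xi>^4) powr (- (\<kappa> * \<theta> / \<eta>^2))"
proof -
  interpret heston_frequency \<kappa> \<eta> \<rho> \<xi>
    using assms by unfold_locales auto
  define c where "c = \<kappa> * \<theta> / \<eta>^2"
  define Y where "Y = 1 + \<eta>^4 * (1 - \<bar>\<rho>\<bar>)^2 * t^4 / 96 * \<xi>^4"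
  have "Y \<le> y t" unfolding Y_def using y_growth assms by simp
  moreover have "0 < Y" unfolding Y_def by (simp add: add_pos_nonneg)
  ultimately have "0 < y t" by simp
  have "Re (heston_B \<kappa> \<eta> \<rho> \<xi> t) * v0 \<le> 0"
    using Re_heston_B[OF \<open>0 < y t\<close>] q_nonneg \<open>0 < y t\<close> assms
    by (simp add: mult_nonpos_nonneg)
  then have "cmod (heston_cf v0 \<kappa> \<theta> \<eta> \<rho> t \<xi>) \<le> exp (Re (heston_A \<kappa> \<theta> \<eta> \<rho> \<xi> t))"
    by (simp add: heston_cf_def norm_exp_eq_Re)
  also have "\<dots> = exp (c * \<kappa> * t) * y t powr (- c)"
    using \<open>0 < y t\<close> by (simp add: Re_heston_A c_def powr_def right_diff_distrib flip: exp_add)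
  also have "\<dots> \<le> exp (c * \<kappa> * t) * Y powr (- c)"
    using \<open>0 < Y\<close> \<open>Y \<le> y t\<close> assms by (simp add: c_def powr_mono2')
  finally show ?thesis by (simp add: c_def Y_def)
qed

theorem mainTheorem5:
  fixes v0 \<kappa> \<theta> \<eta> \<rho> t :: real and p :: ennreal
  assumes "v0 > 0" and "\<kappa> > 0" and "\<theta> > 0" and "\<eta> > 0"
    and "2 * \<kappa> * \<theta> > \<eta>\<^sup>2"
    and "-1 < \<rho>" and "\<rho> < 1"
    and "t > 0"
    and "1 \<le> p"
  shows "memLp p (heston_cf v0 \<kappa> \<theta> \<eta> \<rho> t)"
proof (rule memLp_of_norm_le_powr_quartic)
  show "heston_cf v0 \<kappa> \<theta> \<eta> \<rho> t \<in> borel_measurable lborel"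
    by (rule measurable_heston_cf)
  show "0 < \<eta>^4 * (1 - \<bar>\<rho>\<bar>)^2 * t^4 / 96"
    using assms by simp
  show "1/2 \<le> \<kappa> * \<theta> / \<eta>^2"
    using assms by (simp add: field_simps)
  show "cmod (heston_cf v0 \<kappa> \<theta> \<eta> \<rho> t \<xi>)
      \<le> exp (\<kappa> * \<theta> / \<eta>^2 * \<kappa> * t) * (1 + \<eta>^4 * (1 - \<bar>\<rho>\<bar>)^2 * t^4 / 96 * \<xi>^4) powr (- (\<kappa> * \<theta> / \<eta>^2))"
    for \<xi> using assms by (intro norm_heston_cf_le) auto
qed (fact \<open>1 \<le> p\<close>)

end
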